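(* Let $\mathbf x\in\mathbb F^6$ with $x_5=x_6=0$. Then for every $n\ge1$, every element of $\mathcal O_{\mathbf x}(n)$ is a linear combination of right-normed products $a_{\sigma(1)}(a_{\sigma(2)}(\cdots(a_{\sigma(n-1)}a_{\sigma(n)})\cdots))$, $\sigma\in S_n$. In particular there is a surjection of $S_n$-modules $\mathbb FS_n\to\mathcal O_{\mathbf x}(n)$.
   Context: Let $\mathbb F$ be a field of characteristic $0$. Let $\mathcal T$ be the free symmetric operad over $\mathbb F$ generated by one binary operation $(a_1,a_2)\mapsto a_1a_2$ with no symmetry; its arity-$n$ component $\mathcal T(n)$ is the vector space with basis all multilinear bracketed (nonassociative) monomials in $a_1,\dots,a_n$, with the right $S_n$-action permuting arguments. For $\mathbf x=(x_1,\dots,x_6)\in\mathbb F^6$, $\mathcal O_{\mathbf x}$ denotes the quotient of $\mathcal T$ by the operad ideal $\mathcal J_{\mathbf x}$ generated by the relation (LR): $(a_1a_2)a_3 = x_1a_1(a_2a_3)+x_2a_1(a_3a_2)+x_3a_2(a_1a_3)+x_4a_2(a_3a_1)+x_5a_3(a_1a_2)+x_6a_3(a_2a_1)$. *)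

theory Defs
  imports "HOL-Library.Multiset" "HOL-Combinatorics.Permutations"
begin

text \<open>Bracketed monomials: binary trees with leaves labelled by argument indices.\<close>
datatype tree = Leaf nat | Node tree tree

fun leaves :: "tree \<Rightarrow> nat list" where
  "leaves (Leaf a) = [a]"
| "leaves (Node t u) = leaves t @ leaves u"

definition multilinear :: "nat \<Rightarrow> tree \<Rightarrow> bool" where
  "multilinear n t \<longleftrightarrow> mset (leaves t) = mset [1..<Suc n]"

text \<open>Vectors: finitely supported formal linear combinations of trees.
  T(n) consists of those supported on multilinear monomials of arity n.\<close>
definition Tn :: "nat \<Rightarrow> (tree \<Rightarrow> 'f::field) set" where
  "Tn n = {v. finite {t. v t \<noteq> 0} \<and> (\<forall>t. v t \<noteq> 0 \<longrightarrow> multilinear n t)}"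

definition basis :: "tree \<Rightarrow> tree \<Rightarrow> 'f::field" where
  "basis t = (\<lambda>s. if s = t then 1 else 0)"

text \<open>Linear extension of a map on basis monomials.\<close>
definition pushf :: "(tree \<Rightarrow> tree) \<Rightarrow> (tree \<Rightarrow> 'f::field) \<Rightarrow> tree \<Rightarrow> 'f" where
  "pushf f v = (\<lambda>s. \<Sum>t \<in> {t. v t \<noteq> 0 \<and> f t = s}. v t)"

fun mapl :: "(nat \<Rightarrow> nat) \<Rightarrow> tree \<Rightarrow> tree" where
  "mapl g (Leaf a) = Leaf (g a)"
| "mapl g (Node t u) = Node (mapl g t) (mapl g u)"

fun subst_leaf :: "nat \<Rightarrow> tree \<Rightarrow> tree \<Rightarrow> tree" where
  "subst_leaf i s (Leaf a) = (if a = i then s else Leaf a)"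
| "subst_leaf i s (Node t u) = Node (subst_leaf i s t) (subst_leaf i s u)"

text \<open>Partial composition t \<circ>_i s, with t of arity m and s of arity k (result of arity m+k-1).\<close>
definition pcomp :: "tree \<Rightarrow> nat \<Rightarrow> nat \<Rightarrow> tree \<Rightarrow> tree" where
  "pcomp t i k s = subst_leaf i (mapl (\<lambda>j. j + i - 1) s)
                     (mapl (\<lambda>j. if i < j then j + k - 1 else j) t)"

definition LR :: "(nat \<Rightarrow> 'f::field) \<Rightarrow> tree \<Rightarrow> 'f" where
  "LR x = (\<lambda>s. basis (Node (Node (Leaf 1) (Leaf 2)) (Leaf 3)) s
     - x 1 * basis (Node (Leaf 1) (Node (Leaf 2) (Leaf 3))) s
     - x 2 * basis (Node (Leaf 1) (Node (Leaf 3) (Leaf 2))) s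
     - x 3 * basis (Node (Leaf 2) (Node (Leaf 1) (Leaf 3))) s
     - x 4 * basis (Node (Leaf 2) (Node (Leaf 3) (Leaf 1))) s
     - x 5 * basis (Node (Leaf 3) (Node (Leaf 1) (Leaf 2))) s
     - x 6 * basis (Node (Leaf 3) (Node (Leaf 2) (Leaf 1))) s)"

text \<open>The operad ideal generated by LR: the smallest family of subspaces J(n) \<subseteq> T(n)
  containing LR in arity 3, stable under the S_n-actions, and under partial compositions
  with arbitrary elements of T on either side (by linearity it suffices to compose with
  basis monomials).\<close>
inductive_set Jx :: "(nat \<Rightarrow> 'f::field) \<Rightarrow> (nat \<times> (tree \<Rightarrow> 'f)) set"
  for x :: "nat \<Rightarrow> 'f" where
  gen: "(3, LR x) \<in> Jx x"
| zero: "(n, (\<lambda>_. 0)) \<in> Jx x"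
| add: "(n, v) \<in> Jx x \<Longrightarrow> (n, w) \<in> Jx x \<Longrightarrow> (n, (\<lambda>s. v s + w s)) \<in> Jx x"
| smult: "(n, v) \<in> Jx x \<Longrightarrow> (n, (\<lambda>s. c * v s)) \<in> Jx x"
| perm: "(n, v) \<in> Jx x \<Longrightarrow> \<sigma> permutes {1..n} \<Longrightarrow> (n, pushf (mapl \<sigma>) v) \<in> Jx x"
| comp_left: "(m, v) \<in> Jx x \<Longrightarrow> multilinear k s \<Longrightarrow> 1 \<le> k \<Longrightarrow> 1 \<le> i \<Longrightarrow> i \<le> m \<Longrightarrow>
      (m + k - 1, pushf (\<lambda>t. pcomp t i k s) v) \<in> Jx x"
| comp_right: "(k, v) \<in> Jx x \<Longrightarrow> multilinear m s \<Longrightarrow> 1 \<le> i \<Longrightarrow> i \<le> m \<Longrightarrow>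
      (m + k - 1, pushf (\<lambda>t. pcomp s i k t) v) \<in> Jx x"

inductive_set spanF :: "(tree \<Rightarrow> 'f::field) set \<Rightarrow> (tree \<Rightarrow> 'f) set" for S where
  zero: "(\<lambda>_. 0) \<in> spanF S"
| step: "u \<in> S \<Longrightarrow> w \<in> spanF S \<Longrightarrow> (\<lambda>s. c * u s + w s) \<in> spanF S"

fun rnorm :: "nat list \<Rightarrow> tree" where
  "rnorm [] = Leaf 0"
| "rnorm [a] = Leaf a"
| "rnorm (a # as) = Node (Leaf a) (rnorm as)"

definition right_normed :: "nat \<Rightarrow> (nat \<Rightarrow> nat) \<Rightarrow> tree" where
  "right_normed n \<sigma> = rnorm (map \<sigma> [1..<Suc n])"

end

theory Submission
  imports Defs
begin

text \<open>
  When \<open>x\<^sub>5 = x\<^sub>6 = 0\<close>, the relation (LR) rewrites \<open>(ab)c\<close> as a combination of \<open>a(bc)\<close>,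
  \<open>a(cb)\<close>, \<open>b(ac)\<close> and \<open>b(ca)\<close>: monomials of the same size whose left factor is strictly smaller
  than \<open>ab\<close>. A monomial that is not right-normed has the shape
  \<open>a\<^sub>i\<^sub>1(a\<^sub>i\<^sub>2(\<dots>(a\<^sub>i\<^sub>k((ab)c))\<dots>))\<close>. The corresponding instance of (LR) lies in \<open>J\<^sub>x\<close>, since it
  arises from (LR) by substituting \<open>a, b, c\<close> into its three arguments, grafting the result
  into the comb \<open>a\<^sub>i\<^sub>1(\<dots>(a\<^sub>i\<^sub>k \<box>)\<dots>)\<close> and permuting the arguments. Rewriting with it decreases
  the subtree below the leaf prefix in the lexicographic order on (size, size of the left
  factor), so well-founded induction reduces every monomial modulo \<open>J\<^sub>x\<close> to a combination of
  right-normed ones.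
\<close>

fun right_comb :: "tree list \<Rightarrow> tree \<Rightarrow> tree" where
  "right_comb [] t = t"
| "right_comb (l # ls) t = Node l (right_comb ls t)"

fun subst3 :: "tree \<Rightarrow> tree \<Rightarrow> tree \<Rightarrow> tree \<Rightarrow> tree" where
  "subst3 a b c (Leaf j) = (if j = 1 then a else if j = 2 then b else if j = 3 then c else Leaf j)"
| "subst3 a b c (Node l r) = Node (subst3 a b c l) (subst3 a b c r)"

fun left_size :: "tree \<Rightarrow> nat" where
  "left_size (Leaf _) = 0"
| "left_size (Node l r) = size l"

lemma leaves_nonempty [simp]: "leaves t \<noteq> []"
  by (induction t) auto

lemma leaves_right_comb [simp]: "leaves (right_comb ls t) = concat (map leaves ls) @ leaves t"
  by (induction ls) auto

lemma leaves_mapl [simp]: "leaves (mapl f t) = map f (leaves t)"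
  by (induction t) auto

lemma mapl_mapl [simp]: "mapl f (mapl g t) = mapl (f \<circ> g) t"
  by (induction t) auto

lemma mapl_ident: "(\<And>j. j \<in> set (leaves t) \<Longrightarrow> f j = j) \<Longrightarrow> mapl f t = t"
  by (induction t) auto

lemma mapl_right_comb: "mapl f (right_comb ls t) = right_comb (map (mapl f) ls) (mapl f t)"
  by (induction ls) auto

lemma mapl_subst3:
  "set (leaves p) \<subseteq> {1, 2, 3} \<Longrightarrow> mapl f (subst3 a b c p) = subst3 (mapl f a) (mapl f b) (mapl f c) p"
  by (induction p) auto

lemma right_comb_snoc: "right_comb (ls @ [l]) t = right_comb ls (Node l t)"
  by (induction ls) auto

lemma leaves_rnorm: "q \<noteq> [] \<Longrightarrow> leaves (rnorm q) = q"
  by (induction q rule: rnorm.induct) auto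

lemma right_comb_Leaf_rnorm: "q \<noteq> [] \<Longrightarrow> right_comb (map Leaf as) (rnorm q) = rnorm (as @ q)"
proof (induction as)
  case (Cons a as)
  then show ?case by (cases "as @ q") auto
qed auto

lemma mapl_minus_plus: "\<forall>j\<in>set (leaves t). d < j \<Longrightarrow> mapl (\<lambda>j. j + d) (mapl (\<lambda>j. j - d) t) = t"
  unfolding mapl_mapl by (rule mapl_ident) auto

lemma map_minus_upt: "map (\<lambda>j. j - d) [d + i..<d + k] = [i..<k]"
  by (induction k) auto

lemma leaves_mapl_minus_upt:
  "leaves t = [d + 1..<d + k + 1] \<Longrightarrow> leaves (mapl (\<lambda>j. j - d) t) = [1..<Suc k]"
  using map_minus_upt[of d 1 "k + 1"] by simp

lemma pcomp_Node [simp]: "pcomp (Node l r) i k s = Node (pcomp l i k s) (pcomp r i k s)"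
  by (simp add: pcomp_def)

lemma pcomp_Leaf_self [simp]: "pcomp (Leaf i) i k s = mapl (\<lambda>j. j + i - 1) s"
  by (simp add: pcomp_def)

lemma pcomp_below: "\<forall>j\<in>set (leaves t). j < i \<Longrightarrow> pcomp t i k s = t"
  by (induction t) (auto simp: pcomp_def)

lemma pcomp_mapl_above:
  "(\<And>j. j \<in> set (leaves t) \<Longrightarrow> i < f j) \<Longrightarrow> 1 \<le> k \<Longrightarrow> pcomp (mapl f t) i k s = mapl (\<lambda>j. f j + k - 1) t"
  by (induction t) (auto simp: pcomp_def)

lemma pcomp_right_comb:
  "pcomp (right_comb ls u) i k s = right_comb (map (\<lambda>l. pcomp l i k s) ls) (pcomp u i k s)"
  by (induction ls) auto

lemma pcomp3_eq_subst3:
  assumes "set (leaves p) \<subseteq> {1, 2, 3}" and "1 \<le> k1" and "1 \<le> k2"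
    and "\<forall>j\<in>set (leaves b). 1 \<le> j" and "\<forall>j\<in>set (leaves c). 1 \<le> j"
  shows "pcomp (pcomp (pcomp p 3 k3 c) 2 k2 b) 1 k1 a
           = subst3 a (mapl (\<lambda>j. j + k1) b) (mapl (\<lambda>j. j + (k1 + k2)) c) p"
  using assms(1)
proof (induction p)
  case (Leaf j)
  then consider "j = 1" | "j = 2" | "j = 3" by auto
  then show ?case
  proof cases
    case 1
    then show ?thesis by (simp add: pcomp_below mapl_ident)
  next
    case 2
    have "pcomp (mapl (\<lambda>j. j + 1) b) 1 k1 a = mapl (\<lambda>j. j + 1 + k1 - 1) b"
      using assms by (intro pcomp_mapl_above) auto
    with 2 show ?thesis by (simp add: pcomp_below)
  next
    case 3
    have "pcomp (mapl (\<lambda>j. j + 2) c) 2 k2 b = mapl (\<lambda>j. j + 2 + k2 - 1) c"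
      and "pcomp (mapl (\<lambda>j. j + 2 + k2 - 1) c) 1 k1 a = mapl (\<lambda>j. j + 2 + k2 - 1 + k1 - 1) c"
      using assms by (intro pcomp_mapl_above; force)+
    with 3 show ?thesis by (simp add: pcomp_below add_ac)
  qed
qed simp

lemma upt_append_split:
  assumes "i \<le> j" and "xs @ ys = [i..<j]"
  shows "xs = [i..<i + length xs]" and "ys = [i + length xs..<j]"
proof -
  have "i + length xs \<le> j" using arg_cong[OF assms(2), of length] assms(1) by simp
  moreover have "take (length xs) [i..<j] = xs" "drop (length xs) [i..<j] = ys"
    using assms(2) by (metis append_eq_conv_conj)+
  ultimately show "xs = [i..<i + length xs]" "ys = [i + length xs..<j]"
    by (simp_all add: take_upt drop_upt)
qed

lemma upt_append3_split:
  assumes "xs @ ys @ zs = [1..<Suc n]" and "xs \<noteq> []" and "ys \<noteq> []" and "zs \<noteq> []"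
  obtains k1 k2 k3 where "1 \<le> k1" "1 \<le> k2" "n = k1 + k2 + k3"
    and "xs = [1..<Suc k1]" "ys = [k1 + 1..<k1 + k2 + 1]" "zs = [k1 + k2 + 1..<k1 + k2 + k3 + 1]"
proof
  have len: "length xs + length ys + length zs = n"
    using arg_cong[OF assms(1), of length] by (simp del: upt_Suc)
  have xs: "xs = [1..<1 + length xs]" and yzs: "ys @ zs = [1 + length xs..<Suc n]"
    using upt_append_split[OF _ assms(1)] by auto
  have "ys = [1 + length xs..<1 + length xs + length ys]"
    and "zs = [1 + length xs + length ys..<Suc n]"
    using upt_append_split[OF _ yzs] len by auto
  with xs len assms(2-4) show "1 \<le> length xs" "1 \<le> length ys" "n = length xs + length ys + length zs"
    "xs = [1..<Suc (length xs)]" "ys = [length xs + 1..<length xs + length ys + 1]"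
    "zs = [length xs + length ys + 1..<length xs + length ys + length zs + 1]"
    by (simp_all del: upt_Suc add: add.commute Suc_leI)
qed

lemma permutation_of_mset_upt:
  assumes "mset p = mset [1..<Suc n]"
  obtains \<sigma> where "\<sigma> permutes {1..n}" and "map \<sigma> [1..<Suc n] = p"
proof
  have len: "length p = n" using assms by (metis length_upt diff_Suc_1 size_mset)
  have set: "set p = {1..n}" using assms by (metis atLeastLessThanSuc_atLeastAtMost mset_eq_setD set_upt)
  define \<sigma> where "\<sigma> i = (if i \<in> {1..n} then p ! (i - 1) else i)" for i
  have "bij_betw ((!) p \<circ> (\<lambda>i. i - 1)) {1..n} {1..n}"
  proof (rule bij_betw_trans)
    show "bij_betw (\<lambda>i. i - 1) {1..n} {..<n}"
      by (rule bij_betw_byWitness[of _ Suc]) auto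
    show "bij_betw ((!) p) {..<n} {1..n}"
      using assms len set by (intro bij_betw_nth) (auto dest: mset_eq_imp_distinct_iff[THEN iffD2])
  qed
  then have "bij_betw \<sigma> {1..n} {1..n}"
    by (rule bij_betw_cong[THEN iffD1, rotated]) (simp add: \<sigma>_def)
  then show "\<sigma> permutes {1..n}"
    by (rule bij_imp_permutes) (auto simp: \<sigma>_def)
  show "map \<sigma> [1..<Suc n] = p"
    by (rule nth_equalityI) (auto simp: len \<sigma>_def nth_upt simp del: upt_Suc)
qed

definition lincomb :: "(nat \<Rightarrow> 'f::field) \<Rightarrow> (nat \<Rightarrow> tree) \<Rightarrow> nat \<Rightarrow> tree \<Rightarrow> 'f" where
  "lincomb c p N = (\<lambda>s. \<Sum>i<N. c i * basis (p i) s)"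

lemma lincomb_cong: "(\<And>i. i < N \<Longrightarrow> p i = q i) \<Longrightarrow> lincomb c p N = lincomb c q N"
  unfolding lincomb_def by (auto intro!: ext sum.cong)

lemma pushf_lincomb: "pushf F (lincomb c p N) = lincomb c (F \<circ> p) N"
proof
  fix s
  let ?v = "lincomb c p N" and ?S = "p ` {..<N}"
  have supp: "{t. ?v t \<noteq> 0} \<subseteq> ?S"
  proof
    fix t assume "t \<in> {t. ?v t \<noteq> 0}"
    then have "(\<Sum>i<N. c i * basis (p i) t) \<noteq> 0" by (simp add: lincomb_def)
    then obtain i where "i < N" "c i * basis (p i) t \<noteq> 0"
      by (meson sum.neutral lessThan_iff)
    then show "t \<in> ?S" by (auto simp: basis_def split: if_splits)
  qed
  have "pushf F ?v s = (\<Sum>t\<in>{t\<in>?S. F t = s}. ?v t)"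
    unfolding pushf_def by (rule sum.mono_neutral_left) (use supp in auto)
  also have "\<dots> = (\<Sum>t\<in>?S. if F t = s then ?v t else 0)"
    by (simp add: sum.inter_filter)
  also have "\<dots> = (\<Sum>t\<in>?S. \<Sum>i<N. if F t = s \<and> t = p i then c i else 0)"
    by (rule sum.cong) (auto simp: lincomb_def basis_def intro: sum.cong)
  also have "\<dots> = (\<Sum>i<N. \<Sum>t\<in>?S. if t = p i then (if F (p i) = s then c i else 0) else 0)"
    by (subst sum.swap) (auto intro!: sum.cong)
  also have "\<dots> = lincomb c (F \<circ> p) N s"
    by (auto simp: lincomb_def basis_def intro!: sum.cong)
  finally show "pushf F ?v s = lincomb c (F \<circ> p) N s" .
qed

section \<open>Instances of the relation in the ideal\<close>

definition LR_monomial :: "nat \<Rightarrow> tree" where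
  "LR_monomial i = [Node (Node (Leaf 1) (Leaf 2)) (Leaf 3),
                    Node (Leaf 1) (Node (Leaf 2) (Leaf 3)),
                    Node (Leaf 1) (Node (Leaf 3) (Leaf 2)),
                    Node (Leaf 2) (Node (Leaf 1) (Leaf 3)),
                    Node (Leaf 2) (Node (Leaf 3) (Leaf 1)),
                    Node (Leaf 3) (Node (Leaf 1) (Leaf 2)),
                    Node (Leaf 3) (Node (Leaf 2) (Leaf 1))] ! i"

definition LR_coeff :: "(nat \<Rightarrow> 'f::field) \<Rightarrow> nat \<Rightarrow> 'f" where
  "LR_coeff x i = (if i = 0 then 1 else - x i)"

lemma LR_eq_lincomb: "LR x = lincomb (LR_coeff x) LR_monomial 7"
  by (rule ext) (simp add: LR_def lincomb_def LR_coeff_def LR_monomial_def numeral_eq_Suc)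

lemma leaves_LR_monomial: "i < 7 \<Longrightarrow> set (leaves (LR_monomial i)) \<subseteq> {1, 2, 3}"
  by (auto simp: LR_monomial_def less_Suc_eq numeral_eq_Suc)

text \<open>Inserting \<open>c\<close>, \<open>b\<close>, \<open>a\<close> into the slots 3, 2, 1 in this order, no insertion shifts a slot
  still to be filled.\<close>

lemma Jx_subst3_lincomb:
  assumes J: "(3, lincomb coef p N) \<in> Jx x"
    and p: "\<And>i. i < N \<Longrightarrow> set (leaves (p i)) \<subseteq> {1, 2, 3}"
    and abc: "leaves a @ leaves b @ leaves c = [1..<Suc n]"
  shows "(n, lincomb coef (\<lambda>i. subst3 a b c (p i)) N) \<in> Jx x"
proof -
  obtain k1 k2 k3 where k: "1 \<le> k1" "1 \<le> k2" "n = k1 + k2 + k3"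
    and a: "leaves a = [1..<Suc k1]" and b: "leaves b = [k1 + 1..<k1 + k2 + 1]"
    and c: "leaves c = [k1 + k2 + 1..<k1 + k2 + k3 + 1]"
    using upt_append3_split[OF abc] by auto
  define b0 where "b0 = mapl (\<lambda>j. j - k1) b"
  define c0 where "c0 = mapl (\<lambda>j. j - (k1 + k2)) c"
  have b0: "leaves b0 = [1..<Suc k2]" and c0: "leaves c0 = [1..<Suc k3]"
    unfolding b0_def c0_def by (simp_all only: leaves_mapl_minus_upt b c)
  have k3: "1 \<le> k3" using c0 leaves_nonempty[of c0] by (cases k3) auto
  have "(3 + k3 - 1 + k2 - 1 + k1 - 1, pushf (\<lambda>t. pcomp t 1 k1 a)
          (pushf (\<lambda>t. pcomp t 2 k2 b0) (pushf (\<lambda>t. pcomp t 3 k3 c0) (lincomb coef p N)))) \<in> Jx x"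
    using k k3 a b0 c0 by (intro Jx.comp_left J) (auto simp: multilinear_def)
  moreover have "3 + k3 - 1 + k2 - 1 + k1 - 1 = n" using k k3 by simp
  moreover have "mapl (\<lambda>j. j + k1) b0 = b" "mapl (\<lambda>j. j + (k1 + k2)) c0 = c"
    unfolding b0_def c0_def using b c by (auto simp del: upt_Suc mapl_mapl intro!: mapl_minus_plus)
  then have "pcomp (pcomp (pcomp (p i) 3 k3 c0) 2 k2 b0) 1 k1 a = subst3 a b c (p i)" if "i < N" for i
    using pcomp3_eq_subst3[OF p[OF that] k(1,2)] b0 c0 by (simp del: upt_Suc)
  then have "pushf (\<lambda>t. pcomp t 1 k1 a) (pushf (\<lambda>t. pcomp t 2 k2 b0)
      (pushf (\<lambda>t. pcomp t 3 k3 c0) (lincomb coef p N))) = lincomb coef (\<lambda>i. subst3 a b c (p i)) N"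
    unfolding pushf_lincomb comp_def by (rule lincomb_cong)
  ultimately show ?thesis by simp
qed

text \<open>Grafting into a comb is a single right composition, with the comb \<open>l\<^sub>1(\<dots>(l\<^sub>m \<box>)\<dots>)\<close>
  as outer operation and its last leaf as the slot.\<close>

lemma Jx_right_comb:
  assumes J: "(k, v) \<in> Jx x" and ls: "concat (map leaves ls) = [1..<Suc d]"
  shows "(d + k, pushf (\<lambda>t. right_comb ls (mapl (\<lambda>j. j + d) t)) v) \<in> Jx x"
proof -
  let ?s = "right_comb ls (Leaf (Suc d))"
  have "multilinear (Suc d) ?s" by (simp add: multilinear_def ls)
  then have "(Suc d + k - 1, pushf (\<lambda>t. pcomp ?s (Suc d) k t) v) \<in> Jx x"
    by (intro Jx.comp_right J) auto
  moreover have "pcomp ?s (Suc d) k t = right_comb ls (mapl (\<lambda>j. j + d) t)" for t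
  proof -
    have "set (leaves l) \<subseteq> set [1..<Suc d]" if "l \<in> set ls" for l
      unfolding ls[symmetric] using that by auto
    then have "map (\<lambda>l. pcomp l (Suc d) k t) ls = ls"
      by (intro map_idI pcomp_below) fastforce
    then show ?thesis by (simp add: pcomp_right_comb)
  qed
  ultimately show ?thesis by simp
qed

lemma LR_instance_consecutive:
  assumes "leaves (right_comb ls (Node (Node a b) c)) = [1..<Suc n]"
  shows "(n, lincomb (LR_coeff x) (\<lambda>i. right_comb ls (subst3 a b c (LR_monomial i))) 7) \<in> Jx x"
proof -
  define d where "d = length (concat (map leaves ls))"
  have ls: "concat (map leaves ls) = [1..<Suc d]"
    and abc: "leaves a @ leaves b @ leaves c = [Suc d..<Suc n]"
    using upt_append_split[of 1 "Suc n" "concat (map leaves ls)"] assms by (auto simp: d_def)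
  have dn: "d < n" using abc by (cases "d < n") auto
  define D where "D = mapl (\<lambda>j. j - d)"
  have "leaves (D a) @ leaves (D b) @ leaves (D c) = leaves (D (Node (Node a b) c))"
    by (simp add: D_def)
  also have "\<dots> = [1..<Suc (n - d)]"
    unfolding D_def using abc dn by (intro leaves_mapl_minus_upt) simp
  finally have "(n - d, lincomb (LR_coeff x) (\<lambda>i. subst3 (D a) (D b) (D c) (LR_monomial i)) 7) \<in> Jx x"
    using Jx.gen[of x] leaves_LR_monomial by (intro Jx_subst3_lincomb) (auto simp: LR_eq_lincomb)
  from Jx_right_comb[OF this ls]
  have "(n, lincomb (LR_coeff x)
           (\<lambda>i. right_comb ls (mapl (\<lambda>j. j + d) (subst3 (D a) (D b) (D c) (LR_monomial i)))) 7) \<in> Jx x"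
    using dn by (simp add: pushf_lincomb comp_def)
  moreover have "mapl (\<lambda>j. j + d) (D t) = t" if "t \<in> {a, b, c}" for t
  proof -
    have "set (leaves t) \<subseteq> set [Suc d..<Suc n]"
      using that by (auto simp del: upt_Suc simp flip: abc)
    then show ?thesis unfolding D_def by (intro mapl_minus_plus) auto
  qed
  ultimately show ?thesis
    by (simp add: mapl_subst3[OF leaves_LR_monomial] cong: lincomb_cong)
qed

lemma LR_instance:
  assumes "multilinear n (right_comb ls (Node (Node a b) c))"
  shows "(n, lincomb (LR_coeff x) (\<lambda>i. right_comb ls (subst3 a b c (LR_monomial i))) 7) \<in> Jx x"
proof -
  obtain \<sigma> where \<sigma>: "\<sigma> permutes {1..n}" "map \<sigma> [1..<Suc n] = leaves (right_comb ls (Node (Node a b) c))"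
    using assms permutation_of_mset_upt unfolding multilinear_def by metis
  define \<tau> where "\<tau> = mapl (inv \<sigma>)"
  have \<sigma>\<tau>: "mapl \<sigma> (\<tau> t) = t" for t
    unfolding \<tau>_def by (simp add: mapl_ident permutes_inverses(1)[OF \<sigma>(1)])
  have "leaves (right_comb (map \<tau> ls) (Node (Node (\<tau> a) (\<tau> b)) (\<tau> c)))
          = map (inv \<sigma>) (map \<sigma> [1..<Suc n])"
    unfolding \<sigma>(2) by (simp add: \<tau>_def map_concat comp_def)
  also have "\<dots> = [1..<Suc n]"
    by (simp add: comp_def permutes_inverses(2)[OF \<sigma>(1)] del: upt_Suc)
  finally have "(n, pushf (mapl \<sigma>) (lincomb (LR_coeff x)
      (\<lambda>i. right_comb (map \<tau> ls) (subst3 (\<tau> a) (\<tau> b) (\<tau> c) (LR_monomial i))) 7)) \<in> Jx x"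
    by (intro Jx.perm \<sigma>(1) LR_instance_consecutive)
  then show ?thesis
    by (simp add: pushf_lincomb mapl_right_comb mapl_subst3[OF leaves_LR_monomial] \<sigma>\<tau> comp_def
        del: mapl_mapl cong: lincomb_cong)
qed

text \<open>The hypotheses \<open>x\<^sub>5 = x\<^sub>6 = 0\<close> remove the two monomials \<open>c(ab)\<close> and \<open>c(ba)\<close>, whose
  left factor \<open>c\<close> need not be smaller than \<open>ab\<close>.\<close>

lemma LR_lincomb_x56:
  assumes "x 5 = 0" and "x 6 = 0"
  shows "lincomb (LR_coeff x) p 7 = (\<lambda>s. basis (p 0) s - lincomb (\<lambda>i. x (Suc i)) (\<lambda>i. p (Suc i)) 4 s)"
  using assms by (simp add: lincomb_def LR_coeff_def numeral_eq_Suc algebra_simps)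

lemma mset_leaves_subst3_LR_monomial:
  "i < 7 \<Longrightarrow> mset (leaves (subst3 a b c (LR_monomial i))) = mset (leaves a) + mset (leaves b) + mset (leaves c)"
  by (auto simp: LR_monomial_def less_Suc_eq numeral_eq_Suc)

lemma subst3_LR_monomial_smaller:
  "i \<in> {1..4} \<Longrightarrow> (subst3 a b c (LR_monomial i), Node (Node a b) c) \<in> measures [size, left_size]"
  by (auto simp: LR_monomial_def numeral_eq_Suc le_Suc_eq)

section \<open>Reduction to right-normed monomials\<close>

definition right_normed_span :: "nat \<Rightarrow> (tree \<Rightarrow> 'f::field) set" where
  "right_normed_span n = spanF {basis (right_normed n \<sigma>) | \<sigma>. \<sigma> permutes {1..n}}"

definition reduces_to_right_normed :: "(nat \<Rightarrow> 'f::field) \<Rightarrow> nat \<Rightarrow> (tree \<Rightarrow> 'f) \<Rightarrow> bool" where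
  "reduces_to_right_normed x n v \<longleftrightarrow> (\<exists>w \<in> right_normed_span n. (n, \<lambda>s. v s - w s) \<in> Jx x)"

lemma spanF_add: "w \<in> spanF S \<Longrightarrow> w' \<in> spanF S \<Longrightarrow> (\<lambda>s. w s + w' s) \<in> spanF S"
proof (induction w rule: spanF.induct)
  case (step u w c)
  then have "(\<lambda>s. c * u s + (w s + w' s)) \<in> spanF S" by (intro spanF.step)
  then show ?case by (simp add: add.assoc)
qed simp

lemma spanF_smult: "w \<in> spanF S \<Longrightarrow> (\<lambda>s. d * w s) \<in> spanF S"
proof (induction w rule: spanF.induct)
  case zero
  then show ?case using spanF.zero by simp
next
  case (step u w c)
  then have "(\<lambda>s. (d * c) * u s + d * w s) \<in> spanF S" by (intro spanF.step)
  then show ?case by (simp add: algebra_simps)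
qed

lemma reduces_to_right_normed_add:
  assumes "reduces_to_right_normed x n v" and "reduces_to_right_normed x n v'"
  shows "reduces_to_right_normed x n (\<lambda>s. v s + v' s)"
proof -
  obtain w w' where "w \<in> right_normed_span n"
    "w' \<in> right_normed_span n"
    and "(n, \<lambda>s. v s - w s) \<in> Jx x" "(n, \<lambda>s. v' s - w' s) \<in> Jx x"
    using assms unfolding reduces_to_right_normed_def by blast
  then show ?thesis
    unfolding reduces_to_right_normed_def right_normed_span_def
    by (intro bexI[of _ "\<lambda>s. w s + w' s"] spanF_add) (auto dest: Jx.add simp: algebra_simps)
qed

lemma reduces_to_right_normed_smult:
  assumes "reduces_to_right_normed x n v"
  shows "reduces_to_right_normed x n (\<lambda>s. d * v s)"
proof -
  obtain w where "w \<in> right_normed_span n"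
    and "(n, \<lambda>s. v s - w s) \<in> Jx x"
    using assms unfolding reduces_to_right_normed_def by blast
  then show ?thesis
    unfolding reduces_to_right_normed_def right_normed_span_def
    by (intro bexI[of _ "\<lambda>s. d * w s"] spanF_smult) (auto dest: Jx.smult[of _ _ _ d] simp: algebra_simps)
qed

lemma reduces_to_right_normed_sum:
  assumes "finite I" and "\<And>i. i \<in> I \<Longrightarrow> reduces_to_right_normed x n (basis (q i))"
  shows "reduces_to_right_normed x n (\<lambda>s. \<Sum>i\<in>I. c i * basis (q i) s)"
  using assms
proof (induction I rule: finite_induct)
  case empty
  show ?case
    unfolding reduces_to_right_normed_def right_normed_span_def
    by (rule bexI[of _ "\<lambda>_. 0"]) (auto intro: Jx.zero spanF.zero)
next
  case (insert i I)
  then show ?case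
    by (simp add: reduces_to_right_normed_add reduces_to_right_normed_smult)
qed

lemma reduces_to_right_normed_Jx:
  assumes "(n, \<lambda>s. v s - u s) \<in> Jx x" and "reduces_to_right_normed x n u"
  shows "reduces_to_right_normed x n v"
proof -
  obtain w where "w \<in> right_normed_span n"
    and "(n, \<lambda>s. u s - w s) \<in> Jx x"
    using assms(2) unfolding reduces_to_right_normed_def by blast
  with Jx.add[OF assms(1) this(2)] show ?thesis
    unfolding reduces_to_right_normed_def by (intro bexI[of _ w]) (simp_all add: algebra_simps)
qed

lemma reduces_to_right_normed_rnorm:
  assumes "q \<noteq> []" and "multilinear n (rnorm q)"
  shows "reduces_to_right_normed x n (basis (rnorm q))"
proof -
  obtain \<sigma> where "\<sigma> permutes {1..n}" and "map \<sigma> [1..<Suc n] = q"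
    using assms permutation_of_mset_upt by (metis multilinear_def leaves_rnorm)
  then have "basis (rnorm q) \<in> {basis (right_normed n \<sigma>) | \<sigma>. \<sigma> permutes {1..n}}"
    unfolding right_normed_def by blast
  from spanF.step[OF this spanF.zero, of 1]
  show ?thesis
    unfolding reduces_to_right_normed_def right_normed_span_def
    by (intro bexI[of _ "basis (rnorm q)"]) (auto intro: Jx.zero)
qed

lemma reduces_to_right_normed_LR_step:
  assumes x56: "x 5 = 0" "x 6 = 0"
    and LR: "(n, lincomb (LR_coeff x) (\<lambda>i. C (subst3 a b c (LR_monomial i))) 7) \<in> Jx x"
    and smaller: "\<And>i. i \<in> {1..4} \<Longrightarrow> reduces_to_right_normed x n (basis (C (subst3 a b c (LR_monomial i))))"
  shows "reduces_to_right_normed x n (basis (C (Node (Node a b) c)))"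
proof -
  let ?w = "lincomb (\<lambda>i. x (Suc i)) (\<lambda>i. C (subst3 a b c (LR_monomial (Suc i)))) 4"
  have "(n, \<lambda>s. basis (C (Node (Node a b) c)) s - ?w s) \<in> Jx x"
    using LR by (simp add: LR_lincomb_x56[OF x56] LR_monomial_def[of 0])
  moreover have "reduces_to_right_normed x n ?w"
    unfolding lincomb_def using smaller by (intro reduces_to_right_normed_sum) auto
  ultimately show ?thesis by (rule reduces_to_right_normed_Jx)
qed

lemma reduces_to_right_normed_right_comb_Leaf:
  assumes x56: "x 5 = 0" "x 6 = 0"
  shows "multilinear n (right_comb (map Leaf as) t)
           \<Longrightarrow> reduces_to_right_normed x n (basis (right_comb (map Leaf as) t))"
proof (induction t arbitrary: as rule: wf_induct[OF wf_measures[of "[size, left_size]"]])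
  case (1 t)
  have IH: "reduces_to_right_normed x n (basis (right_comb (map Leaf bs) u))"
    if "(u, t) \<in> measures [size, left_size]" and "multilinear n (right_comb (map Leaf bs) u)" for u bs
    using "1.IH" that by blast
  show ?case
  proof (cases t)
    case (Leaf a)
    then have "right_comb (map Leaf as) t = rnorm (as @ [a])"
      using right_comb_Leaf_rnorm[of "[a]" as] by simp
    with "1.prems" show ?thesis by (simp add: reduces_to_right_normed_rnorm)
  next
    case (Node l r)
    show ?thesis
    proof (cases l)
      case (Leaf a)
      then have "right_comb (map Leaf as) t = right_comb (map Leaf (as @ [a])) r"
        using Node by (simp add: right_comb_snoc)
      moreover have "(r, t) \<in> measures [size, left_size]" using Node by simp
      ultimately show ?thesis using "1.prems" IH[of r "as @ [a]"] by simp
    next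
      case (Node a b)
      with \<open>t = Node l r\<close> have t: "t = Node (Node a b) r" by simp
      show ?thesis
        unfolding t
      proof (rule reduces_to_right_normed_LR_step[OF x56 LR_instance])
        show "multilinear n (right_comb (map Leaf as) (Node (Node a b) r))"
          using "1.prems" t by simp
        fix i :: nat assume i: "i \<in> {1..4}"
        show "reduces_to_right_normed x n (basis (right_comb (map Leaf as) (subst3 a b r (LR_monomial i))))"
        proof (rule IH)
          show "(subst3 a b r (LR_monomial i), t) \<in> measures [size, left_size]"
            unfolding t using i by (rule subst3_LR_monomial_smaller)
          show "multilinear n (right_comb (map Leaf as) (subst3 a b r (LR_monomial i)))"
            using "1.prems" i t by (simp add: multilinear_def mset_leaves_subst3_LR_monomial add.assoc)
        qed
      qed
    qed
  qed
qed

theorem mainTheorem7: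
  fixes x :: "nat \<Rightarrow> 'f::field_char_0" and n :: nat and v :: "tree \<Rightarrow> 'f"
  assumes "x 5 = 0" and "x 6 = 0" and "n \<ge> 1" and "v \<in> Tn n"
  shows "\<exists>w \<in> spanF {basis (right_normed n \<sigma>) | \<sigma>. \<sigma> permutes {1..n}}.
           (n, (\<lambda>s. v s - w s)) \<in> Jx x"
proof -
  let ?S = "{t. v t \<noteq> 0}"
  have "finite ?S" and "\<And>t. t \<in> ?S \<Longrightarrow> multilinear n t"
    using assms(4) by (auto simp: Tn_def)
  then have "reduces_to_right_normed x n (\<lambda>s. \<Sum>t\<in>?S. v t * basis t s)"
    using reduces_to_right_normed_right_comb_Leaf[OF assms(1,2), of n "[]"]
    by (intro reduces_to_right_normed_sum) auto
  moreover have "(\<lambda>s. \<Sum>t\<in>?S. v t * basis t s) = v"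
    using \<open>finite ?S\<close> by (intro ext) (simp add: basis_def if_distrib sum.delta' cong: if_cong)
  ultimately have "reduces_to_right_normed x n v" by (simp only:)
  then show ?thesis unfolding reduces_to_right_normed_def right_normed_span_def .
qed

end
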